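(* Let $f\in\mathcal{K}$ have radius of convergence $R>0$, with Khinchin family $(X_t)$ and fulcrum $F$, and let $Z$ be a standard normal random variable. Fix an integer $n\ge3$. Then $$\lim_{t\uparrow R}\mathbf{E}(\breve{X}_t^j)=\mathbf{E}(Z^j)\quad\text{for every }3\le j\le n$$ if and only if $$\lim_{s\uparrow\ln R}\frac{F^{(j)}(s)}{F''(s)^{j/2}}=0\quad\text{for every }3\le j\le n.$$
   Context: The class $\mathcal{K}$ consists of non-constant power series $f(z)=\sum_{n\ge0}a_nz^n$ with radius of convergence $R\in(0,+\infty]$, with $a_n\ge 0$ for all $n$ and $a_0>0$. For $t\in(0,R)$, $X_t$ is the random variable with $\mathbf{P}(X_t=n)=a_nt^n/f(t)$, $n\ge0$. Write $m_f(t)=\mathbf{E}(X_t)=tf'(t)/f(t)$, $\sigma_f^2(t)=\mathbf{V}(X_t)=t\,m_f'(t)>0$, and $\breve{X}_t=(X_t-m_f(t))/\sigma_f(t)$. The fulcrum of $f$ is $F(s)=\ln f(e^s)$ for real $s<\ln R$ (with $\ln R=+\infty$ if $R=+\infty$); $F''(s)=\sigma_f^2(e^s)$. Limits $t\uparrow R$ mean $t\to+\infty$ when $R=+\infty$. *)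

theory Defs
  imports "HOL-Probability.Probability"
begin

definition ps_f :: "(nat \<Rightarrow> real) \<Rightarrow> real \<Rightarrow> real" where
  "ps_f a t = (\<Sum>k. a k * t ^ k)"

text \<open>Khinchin family: P(X_t = k) = a_k t^k / f(t).\<close>
definition kh_prob :: "(nat \<Rightarrow> real) \<Rightarrow> real \<Rightarrow> nat \<Rightarrow> real" where
  "kh_prob a t k = a k * t ^ k / ps_f a t"

definition kh_mean :: "(nat \<Rightarrow> real) \<Rightarrow> real \<Rightarrow> real" where
  "kh_mean a t = (\<Sum>k. real k * kh_prob a t k)"

definition kh_var :: "(nat \<Rightarrow> real) \<Rightarrow> real \<Rightarrow> real" where
  "kh_var a t = (\<Sum>k. (real k - kh_mean a t)^2 * kh_prob a t k)"

definition kh_norm_moment :: "(nat \<Rightarrow> real) \<Rightarrow> nat \<Rightarrow> real \<Rightarrow> real" where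
  "kh_norm_moment a j t =
     (\<Sum>k. ((real k - kh_mean a t) / sqrt (kh_var a t)) ^ j * kh_prob a t k)"

definition fulcrum :: "(nat \<Rightarrow> real) \<Rightarrow> real \<Rightarrow> real" where
  "fulcrum a s = ln (ps_f a (exp s))"

definition std_normal_moment :: "nat \<Rightarrow> real" where
  "std_normal_moment j = integral\<^sup>L lborel (\<lambda>x. std_normal_density x * x ^ j)"

definition radius_filter :: "(nat \<Rightarrow> real) \<Rightarrow> real filter" where
  "radius_filter a = (if conv_radius a = \<infinity> then at_top
                      else at_left (real_of_ereal (conv_radius a)))"

definition log_radius_filter :: "(nat \<Rightarrow> real) \<Rightarrow> real filter" where
  "log_radius_filter a = (if conv_radius a = \<infinity> then at_top
                          else at_left (ln (real_of_ereal (conv_radius a))))"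

end

theory Submission
  imports Defs "HOL-Real_Asymp.Real_Asymp"
begin

text \<open>
  Write F for the fulcrum and, for a centre c, Phi_c(s) = e^(-cs) f(e^s). Then
  Phi_c^(j)(s) / Phi_c(s) = E((X_t - c)^j) at t = e^s, and ln Phi_c = F - cs. Differentiating
  Phi_c' = Phi_c (ln Phi_c)' repeatedly gives the moment-cumulant recursion
  Phi_c^(j+1) = sum_i (j choose i) (ln Phi_c)^(i+1) Phi_c^(j-i), which also shows that F is smooth.
  With c = F'(s) and after normalisation by F''(s)^(j/2), the normalised moments of X_t and the
  numbers F^(j)(s) / F''(s)^(j/2) satisfy the same recursion as the moments and the cumulants
  0, 1, 0, 0, ... of the standard normal law. The recursion is triangular, so convergence of the
  moments of orders up to n is equivalent to convergence of the cumulants of orders up to n.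
  Finally, t = e^s turns s -> ln R into t -> R.
\<close>

section \<open>The moment--cumulant recursion\<close>

lemma sum_binomial_product_Suc:
  fixes u v :: "nat \<Rightarrow> real"
  shows "(\<Sum>k\<le>n. real (n choose k) * (u (Suc k) * v (n - k) + u k * v (Suc (n - k))))
       = (\<Sum>k\<le>Suc n. real (Suc n choose k) * u k * v (Suc n - k))"
proof -
  have shifted: "(\<Sum>k\<le>n. real (n choose k) * (u k * v (Suc (n - k))))
        = u 0 * v (Suc n) + (\<Sum>k<n. real (n choose Suc k) * u (Suc k) * v (n - k))"
    by (subst sum.atMost_shift) (auto simp: Suc_diff_Suc mult.assoc intro!: sum.cong)
  have "(\<Sum>k\<le>Suc n. real (Suc n choose k) * u k * v (Suc n - k))
      = u 0 * v (Suc n) + (\<Sum>k\<le>n. real (Suc n choose Suc k) * u (Suc k) * v (n - k))"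
    by (subst sum.atMost_Suc_shift) simp
  also have "\<dots> = u 0 * v (Suc n) + (\<Sum>k\<le>n. real (n choose k) * u (Suc k) * v (n - k))
        + (\<Sum>k<n. real (n choose Suc k) * u (Suc k) * v (n - k))"
    by (simp add: sum.distrib algebra_simps lessThan_Suc_atMost[symmetric])
  finally show ?thesis using shifted by (simp add: sum.distrib algebra_simps)
qed

lemma DERIV_binomial_product_sum:
  fixes U V :: "nat \<Rightarrow> real \<Rightarrow> real"
  assumes U: "\<And>i. i \<le> n \<Longrightarrow> (U i has_real_derivative U (Suc i) s) (at s)"
    and V: "\<And>i. i \<le> n \<Longrightarrow> (V i has_real_derivative V (Suc i) s) (at s)"
  shows "((\<lambda>x. \<Sum>k\<le>n. real (n choose k) * U k x * V (n - k) x) has_real_derivative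
          (\<Sum>k\<le>Suc n. real (Suc n choose k) * U k s * V (Suc n - k) s)) (at s)"
proof -
  have "((\<lambda>x. U k x * V (n - k) x) has_real_derivative
          U (Suc k) s * V (n - k) s + U k s * V (Suc (n - k)) s) (at s)" if "k \<le> n" for k
    using DERIV_mult[OF U[OF that] V[of "n - k"]] by (simp add: mult.commute)
  then have "((\<lambda>x. \<Sum>k\<le>n. real (n choose k) * U k x * V (n - k) x) has_real_derivative
          (\<Sum>k\<le>n. real (n choose k) * (U (Suc k) s * V (n - k) s + U k s * V (Suc (n - k)) s))) (at s)"
    by (auto intro!: DERIV_sum simp: mult.assoc intro: DERIV_cmult)
  then show ?thesis
    by (simp only: sum_binomial_product_Suc[of n "\<lambda>k. U k s" "\<lambda>k. V k s"])
qed

lemma moment_cumulant_recursion: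
  fixes \<Phi> K :: "nat \<Rightarrow> real \<Rightarrow> real"
  assumes S: "open S"
    and d\<Phi>: "\<And>j x. x \<in> S \<Longrightarrow> (\<Phi> j has_real_derivative \<Phi> (Suc j) x) (at x)"
    and pos: "\<And>x. x \<in> S \<Longrightarrow> \<Phi> 0 x > 0"
    and dK: "\<And>i x. i \<le> j \<Longrightarrow> x \<in> S \<Longrightarrow> (K i has_real_derivative K (Suc i) x) (at x)"
    and K0: "\<And>x. x \<in> S \<Longrightarrow> K 0 x = ln (\<Phi> 0 x)"
    and s: "s \<in> S"
  shows "\<Phi> (Suc j) s = (\<Sum>i\<le>j. real (j choose i) * K (Suc i) s * \<Phi> (j - i) s)"
  using dK s
proof (induction j arbitrary: s)
  case 0
  have "((\<lambda>x. ln (\<Phi> 0 x)) has_real_derivative \<Phi> 1 s / \<Phi> 0 s) (at s)"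
    using pos[OF "0.prems"(2)] by (auto intro!: derivative_eq_intros d\<Phi>[OF "0.prems"(2)])
  then have "(K 0 has_real_derivative \<Phi> 1 s / \<Phi> 0 s) (at s)"
    by (rule has_field_derivative_transform_within_open[OF _ S "0.prems"(2)]) (simp add: K0)
  then have "K 1 s = \<Phi> 1 s / \<Phi> 0 s"
    using "0.prems" DERIV_unique by fastforce
  then show ?case using pos[OF "0.prems"(2)] by simp
next
  case (Suc j)
  define W where "W j x = (\<Sum>i\<le>j. real (j choose i) * K (Suc i) x * \<Phi> (j - i) x)" for j x
  have "(W j has_real_derivative W (Suc j) s) (at s)"
    unfolding W_def by (rule DERIV_binomial_product_sum) (use Suc.prems d\<Phi> in auto)
  moreover have "(W j has_real_derivative \<Phi> (Suc (Suc j)) s) (at s)"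
    by (rule has_field_derivative_transform_within_open[OF d\<Phi>[OF Suc.prems(2)] S Suc.prems(2)])
      (use Suc.IH Suc.prems(1) in \<open>simp add: W_def\<close>)
  ultimately show ?case using DERIV_unique unfolding W_def by blast
qed

lemma higher_deriv_ln_has_derivative:
  fixes \<Phi> :: "nat \<Rightarrow> real \<Rightarrow> real"
  assumes S: "open S"
    and d\<Phi>: "\<And>j x. x \<in> S \<Longrightarrow> (\<Phi> j has_real_derivative \<Phi> (Suc j) x) (at x)"
    and pos: "\<And>x. x \<in> S \<Longrightarrow> \<Phi> 0 x > 0"
    and s: "s \<in> S"
  shows "((deriv ^^ j) (\<lambda>x. ln (\<Phi> 0 x)) has_real_derivative
           (deriv ^^ Suc j) (\<lambda>x. ln (\<Phi> 0 x)) s) (at s)"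
  using s
proof (induction j arbitrary: s rule: less_induct)
  case (less j)
  define D where "D i = (deriv ^^ i) (\<lambda>x. ln (\<Phi> 0 x))" for i
  have "D j differentiable at s"
  proof (cases j)
    case 0
    have "((\<lambda>x. ln (\<Phi> 0 x)) has_real_derivative \<Phi> 1 s / \<Phi> 0 s) (at s)"
      using pos[OF less.prems] by (auto intro!: derivative_eq_intros d\<Phi>[OF less.prems])
    then show ?thesis using 0 by (auto simp: D_def real_differentiable_def)
  next
    case (Suc m)
    have dD: "(D i has_real_derivative D (Suc i) x) (at x)" if "i < j" "x \<in> S" for i x
      using less.IH[OF that] by (simp add: D_def)
    \<comment> \<open>the recursion at order m solves for the top cumulant D j in terms of lower ones\<close>
    define G where "G x = (\<Phi> j x - (\<Sum>i<m. real (m choose i) * D (Suc i) x * \<Phi> (m - i) x)) / \<Phi> 0 x"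
      for x
    have "D j x = G x" if "x \<in> S" for x
    proof -
      have "\<Phi> (Suc m) x = (\<Sum>i\<le>m. real (m choose i) * D (Suc i) x * \<Phi> (m - i) x)"
        by (rule moment_cumulant_recursion[OF S d\<Phi> pos _ _ that]) (use dD Suc in \<open>auto simp: D_def\<close>)
      then show ?thesis
        using pos[OF that] by (simp add: G_def Suc lessThan_Suc_atMost[symmetric] field_simps)
    qed
    moreover have "G differentiable at s"
      unfolding G_def using pos[OF less.prems] dD[OF _ less.prems] d\<Phi>[OF less.prems] Suc
      by (intro differentiable_divide differentiable_diff differentiable_sum differentiable_mult
          differentiable_const ballI) (auto simp: real_differentiable_def)
    ultimately show ?thesis
      using has_field_derivative_transform_within_open[OF _ S less.prems, of G _ "D j"]
      by (metis real_differentiable_def)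
  qed
  then show ?case by (simp add: D_def DERIV_deriv_iff_real_differentiable)
qed

section \<open>Centred exponential series\<close>

lemma open_exp_less_conv_radius: "open {s. ereal (exp s) < conv_radius a}"
proof (cases "conv_radius a")
  case (real r)
  then have "{s. ereal (exp s) < conv_radius a} = {s. exp s < r}" by auto
  then show ?thesis by (auto intro!: open_Collect_less continuous_intros)
qed auto

lemma exp_less_conv_radius_gt:
  assumes "ereal (exp u) < conv_radius a"
  obtains v where "u < v" "ereal (exp v) < conv_radius a"
proof -
  obtain e where "e > 0" "ball u e \<subseteq> {s. ereal (exp s) < conv_radius a}"
    using openE[OF open_exp_less_conv_radius] assms by blast
  moreover have "u + e / 2 \<in> ball u e" using \<open>e > 0\<close> by (simp add: dist_real_def)
  ultimately show ?thesis using that[of "u + e / 2"] by auto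
qed

lemma summable_poly_exp_within_conv_radius:
  fixes a :: "nat \<Rightarrow> real"
  assumes "ereal (exp u) < conv_radius a" "C \<ge> 0"
  shows "summable (\<lambda>k. \<bar>a k\<bar> * (real k + C) ^ p * exp (real k * u))"
proof -
  obtain v where v: "u < v" "ereal (exp v) < conv_radius a"
    using exp_less_conv_radius_gt[OF assms(1)] by blast
  have lim: "((\<lambda>k. (real k + C) ^ p * exp (real k * (u - v))) \<longlongrightarrow> 0) at_top"
    using v(1) by real_asymp
  have "eventually (\<lambda>k. (real k + C) ^ p * exp (real k * (u - v)) \<le> 1) at_top"
    using order_tendstoD(2)[OF lim, of 1] by (auto elim: eventually_mono)
  then have "eventually (\<lambda>k. norm (\<bar>a k\<bar> * (real k + C) ^ p * exp (real k * u))
      \<le> norm (a k * exp v ^ k)) sequentially"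
  proof eventually_elim
    case (elim k)
    have "exp (real k * u) = exp (real k * (u - v)) * exp v ^ k"
      by (simp add: exp_add[symmetric] exp_of_nat_mult[symmetric] algebra_simps)
    then have "norm (\<bar>a k\<bar> * (real k + C) ^ p * exp (real k * u))
        = \<bar>a k\<bar> * ((real k + C) ^ p * exp (real k * (u - v))) * exp v ^ k"
      using assms(2) by (simp add: abs_mult)
    also have "\<dots> \<le> \<bar>a k\<bar> * 1 * exp v ^ k"
      by (intro mult_right_mono mult_left_mono elim) auto
    finally show ?case by (simp add: abs_mult)
  qed
  moreover have "summable (\<lambda>k. norm (a k * exp v ^ k))"
    using abs_summable_in_conv_radius[of "exp v" a] v(2) by simp
  ultimately show ?thesis by (rule summable_comparison_test_ev)
qed

(* For e^s < R, centered_series a c j s is the j-th derivative of s |-> e^(-cs) f(e^s),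
   and it equals e^(-cs) f(e^s) E((X_t - c)^j) at t = e^s. *)
definition centered_series :: "(nat \<Rightarrow> real) \<Rightarrow> real \<Rightarrow> nat \<Rightarrow> real \<Rightarrow> real" where
  "centered_series a c j s = (\<Sum>k. a k * (real k - c) ^ j * exp ((real k - c) * s))"

lemma centered_series_term_bound:
  assumes "\<bar>x\<bar> \<le> B" "x \<le> v"
  shows "\<bar>a k * (real k - c) ^ j * exp ((real k - c) * x)\<bar>
     \<le> \<bar>a k\<bar> * (real k + \<bar>c\<bar>) ^ j * (exp (real k * v) * exp (\<bar>c\<bar> * B))"
proof -
  have "\<bar>real k - c\<bar> ^ j \<le> (real k + \<bar>c\<bar>) ^ j" by (intro power_mono) auto
  moreover have "(real k - c) * x \<le> real k * v + \<bar>c\<bar> * B"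
  proof -
    have "- c * x \<le> \<bar>c\<bar> * B"
      using mult_left_mono[OF assms(1) abs_ge_zero[of c]] abs_ge_minus_self[of "c * x"]
      by (simp add: abs_mult)
    moreover have "real k * x \<le> real k * v" using assms(2) by (simp add: mult_left_mono)
    ultimately show ?thesis by (simp add: algebra_simps)
  qed
  then have "exp ((real k - c) * x) \<le> exp (real k * v) * exp (\<bar>c\<bar> * B)"
    by (simp flip: exp_add)
  ultimately show ?thesis
    by (simp add: abs_mult power_abs mult_mono)
qed

lemma summable_abs_centered_series:
  fixes a :: "nat \<Rightarrow> real"
  assumes "ereal (exp s) < conv_radius a"
  shows "summable (\<lambda>k. \<bar>a k * (real k - c) ^ j * exp ((real k - c) * s)\<bar>)"
proof (rule summable_comparison_test)
  show "summable (\<lambda>k. \<bar>a k\<bar> * (real k + \<bar>c\<bar>) ^ j * (exp (real k * s) * exp (\<bar>c\<bar> * \<bar>s\<bar>)))"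
    using summable_mult2[OF summable_poly_exp_within_conv_radius[OF assms], of "\<bar>c\<bar>" j "exp (\<bar>c\<bar> * \<bar>s\<bar>)"]
    by (simp add: mult.assoc)
  show "\<exists>N. \<forall>k\<ge>N. norm \<bar>a k * (real k - c) ^ j * exp ((real k - c) * s)\<bar>
      \<le> \<bar>a k\<bar> * (real k + \<bar>c\<bar>) ^ j * (exp (real k * s) * exp (\<bar>c\<bar> * \<bar>s\<bar>))"
    using centered_series_term_bound[of s "\<bar>s\<bar>" s] by auto
qed

lemma summable_centered_series:
  fixes a :: "nat \<Rightarrow> real"
  assumes "ereal (exp s) < conv_radius a"
  shows "summable (\<lambda>k. a k * (real k - c) ^ j * exp ((real k - c) * s))"
  using summable_abs_centered_series[OF assms] by (rule summable_rabs_cancel)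

lemma centered_series_has_derivative:
  fixes a :: "nat \<Rightarrow> real"
  assumes "ereal (exp s) < conv_radius a"
  shows "(centered_series a c j has_real_derivative centered_series a c (Suc j) s) (at s)"
proof -
  obtain v where v: "s < v" "ereal (exp v) < conv_radius a"
    using exp_less_conv_radius_gt[OF assms] by blast
  define T where "T = {s - (v - s)..v}"
  define f where "f j k x = a k * (real k - c) ^ j * exp ((real k - c) * x)" for j k x
  have "uniformly_convergent_on T (\<lambda>n x. \<Sum>k<n. f (Suc j) k x)"
  proof (rule Weierstrass_m_test')
    fix k x assume "x \<in> T"
    then have "\<bar>x\<bar> \<le> \<bar>s\<bar> + (v - s)" "x \<le> v" unfolding T_def by auto
    then show "norm (f (Suc j) k x)
        \<le> \<bar>a k\<bar> * (real k + \<bar>c\<bar>) ^ Suc j * (exp (real k * v) * exp (\<bar>c\<bar> * (\<bar>s\<bar> + (v - s))))"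
      unfolding f_def real_norm_def by (rule centered_series_term_bound)
  next
    show "summable (\<lambda>k. \<bar>a k\<bar> * (real k + \<bar>c\<bar>) ^ Suc j
        * (exp (real k * v) * exp (\<bar>c\<bar> * (\<bar>s\<bar> + (v - s)))))"
      using summable_mult2[OF summable_poly_exp_within_conv_radius[OF v(2)], of "\<bar>c\<bar>" "Suc j"]
      by (simp add: mult.assoc)
  qed
  moreover have "(f j k has_field_derivative f (Suc j) k x) (at x within T)" for k x
    unfolding f_def by (auto intro!: derivative_eq_intros simp: algebra_simps)
  moreover have "s \<in> T" "s \<in> interior T" "summable (\<lambda>k. f j k s)"
    using v(1) summable_centered_series[OF assms] by (auto simp: T_def f_def)
  ultimately have "((\<lambda>x. \<Sum>k. f j k x) has_real_derivative (\<Sum>k. f (Suc j) k s)) (at s)"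
    by (intro has_field_derivative_series'(2)[of T]) (auto simp: T_def)
  then show ?thesis by (simp add: centered_series_def[abs_def] f_def)
qed

lemma centered_series_0_pos:
  fixes a :: "nat \<Rightarrow> real"
  assumes "\<forall>k. a k \<ge> 0" "a 0 > 0" "ereal (exp s) < conv_radius a"
  shows "centered_series a c 0 s > 0"
  unfolding centered_series_def
  by (rule suminf_pos2[where i=0]) (use summable_centered_series[OF assms(3), of c 0] assms in auto)

lemma centered_series_2_pos:
  fixes a :: "nat \<Rightarrow> real"
  assumes nonneg: "\<forall>k. a k \<ge> 0" and "a 0 > 0" and nonconst: "\<exists>k>0. a k \<noteq> 0"
    and s: "ereal (exp s) < conv_radius a"
  shows "centered_series a c 2 s > 0"
proof -
  \<comment> \<open>the coefficients \<open>a 0\<close> and \<open>a k\<close>, \<open>k > 0\<close>, cannot both sit at \<open>k = c\<close>\<close>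
  obtain k where "a k > 0" "real k \<noteq> c"
  proof (cases "c = 0")
    case True
    from nonconst obtain k where "k > 0" "a k \<noteq> 0" by blast
    then show ?thesis using that[of k] nonneg True by (simp add: order_neq_le_trans)
  qed (use that[of 0] \<open>a 0 > 0\<close> in auto)
  then show ?thesis
    unfolding centered_series_def
    by (intro suminf_pos2[where i=k] summable_centered_series[OF s]) (use nonneg in auto)
qed

lemma ps_f_exp_eq_centered_series: "ps_f a (exp s) = centered_series a 0 0 s"
  unfolding ps_f_def centered_series_def by (simp add: exp_of_nat_mult)

lemma fulcrum_eq_ln_centered_series: "fulcrum a = (\<lambda>s. ln (centered_series a 0 0 s))"
  by (simp add: fun_eq_iff fulcrum_def ps_f_exp_eq_centered_series)

lemma centered_series_0_eq:
  fixes a :: "nat \<Rightarrow> real"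
  assumes "ereal (exp s) < conv_radius a"
  shows "centered_series a c 0 s = exp (- c * s) * ps_f a (exp s)"
proof -
  have "summable (\<lambda>k. a k * exp s ^ k)"
    using summable_centered_series[OF assms, of 0 0] by (simp add: exp_of_nat_mult)
  moreover have "exp ((real k - c) * s) = exp (- c * s) * exp s ^ k" for k
    by (simp add: exp_of_nat_mult[symmetric] exp_add[symmetric] algebra_simps)
  ultimately show ?thesis
    unfolding centered_series_def ps_f_def by (simp add: suminf_mult[symmetric] ac_simps)
qed

lemma kh_centered_moment_sums:
  fixes a :: "nat \<Rightarrow> real"
  assumes "\<forall>k. a k \<ge> 0" "a 0 > 0" and s: "ereal (exp s) < conv_radius a"
  shows "(\<lambda>k. (real k - c) ^ j * kh_prob a (exp s) k)
           sums (centered_series a c j s / centered_series a c 0 s)"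
proof -
  have "(real k - c) ^ j * kh_prob a (exp s) k
      = a k * (real k - c) ^ j * exp ((real k - c) * s) / centered_series a c 0 s" for k
  proof -
    have "exp ((real k - c) * s) = exp s ^ k * exp (- c * s)"
      by (simp add: exp_of_nat_mult[symmetric] exp_add[symmetric] algebra_simps)
    then show ?thesis by (simp add: kh_prob_def centered_series_0_eq[OF s])
  qed
  moreover have "(\<lambda>k. a k * (real k - c) ^ j * exp ((real k - c) * s)) sums centered_series a c j s"
    unfolding centered_series_def using summable_centered_series[OF s] by (rule summable_sums)
  ultimately show ?thesis by (simp add: sums_divide)
qed

lemma fulcrum_higher_deriv_has_derivative:
  fixes a :: "nat \<Rightarrow> real"
  assumes "\<forall>k. a k \<ge> 0" "a 0 > 0" "ereal (exp s) < conv_radius a"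
  shows "((deriv ^^ j) (fulcrum a) has_real_derivative (deriv ^^ Suc j) (fulcrum a) s) (at s)"
  unfolding fulcrum_eq_ln_centered_series
  using higher_deriv_ln_has_derivative[OF open_exp_less_conv_radius[of a], of "centered_series a 0"]
    centered_series_has_derivative centered_series_0_pos assms
  by blast

text \<open>Centring at \<open>c\<close> changes \<open>ln (centered_series a c 0)\<close> into \<open>fulcrum a - c s\<close>,
  so only the first cumulant is shifted.\<close>
lemma centered_series_cumulant_recursion:
  fixes a :: "nat \<Rightarrow> real"
  assumes nonneg: "\<forall>k. a k \<ge> 0" and a0: "a 0 > 0" and s: "ereal (exp s) < conv_radius a"
  shows "centered_series a c (Suc j) s = (\<Sum>i\<le>j. real (j choose i)
           * ((deriv ^^ Suc i) (fulcrum a) s - (if i = 0 then c else 0)) * centered_series a c (j - i) s)"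
proof -
  define P :: "nat \<Rightarrow> real \<Rightarrow> real"
    where "P i = (if i = 0 then (\<lambda>x. c * x) else if i = 1 then (\<lambda>_. c) else (\<lambda>_. 0))" for i
  define K where "K i x = (deriv ^^ i) (fulcrum a) x - P i x" for i x
  have "(P i has_real_derivative P (Suc i) x) (at x)" for i x
    by (cases "i = 0"; cases "i = 1") (auto simp: P_def intro!: derivative_eq_intros)
  then have "(K i has_real_derivative K (Suc i) x) (at x)"
    if "x \<in> {s. ereal (exp s) < conv_radius a}" for i x
    unfolding K_def using fulcrum_higher_deriv_has_derivative[OF nonneg a0] that
    by (auto intro!: derivative_eq_intros)
  moreover have "K 0 x = ln (centered_series a c 0 x)"
    if "x \<in> {s. ereal (exp s) < conv_radius a}" for x
  proof -
    have "centered_series a 0 0 x > 0" using centered_series_0_pos[OF nonneg a0] that by simp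
    then show ?thesis
      using that by (simp add: K_def P_def fulcrum_def centered_series_0_eq ln_mult)
  qed
  ultimately have "centered_series a c (Suc j) s
      = (\<Sum>i\<le>j. real (j choose i) * K (Suc i) s * centered_series a c (j - i) s)"
    using centered_series_has_derivative centered_series_0_pos[OF nonneg a0] s
    by (intro moment_cumulant_recursion[OF open_exp_less_conv_radius[of a]]) auto
  also have "\<dots> = (\<Sum>i\<le>j. real (j choose i)
      * ((deriv ^^ Suc i) (fulcrum a) s - (if i = 0 then c else 0)) * centered_series a c (j - i) s)"
    by (intro sum.cong) (auto simp: K_def P_def)
  finally show ?thesis .
qed

section \<open>Normalised moments of the Khinchin family\<close>

(* The cumulants of the normalised variable (X_t - m_f(t)) / sigma_f(t) at t = e^s; the first
   one vanishes because the variable is centred. *)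
definition fulcrum_cumulant :: "(nat \<Rightarrow> real) \<Rightarrow> real \<Rightarrow> nat \<Rightarrow> real" where
  "fulcrum_cumulant a s j = (if j = 1 then 0
     else (deriv ^^ j) (fulcrum a) s / ((deriv ^^ 2) (fulcrum a) s) powr (real j / 2))"

context
  fixes a :: "nat \<Rightarrow> real" and s :: real
  assumes nonneg: "\<forall>k. a k \<ge> 0" and a0: "a 0 > 0" and s: "ereal (exp s) < conv_radius a"
begin

lemma kh_mean_eq_deriv_fulcrum: "kh_mean a (exp s) = deriv (fulcrum a) s"
proof -
  have "(\<lambda>k. real k * kh_prob a (exp s) k) sums (centered_series a 0 1 s / centered_series a 0 0 s)"
    using kh_centered_moment_sums[OF nonneg a0 s, of 0 1] by simp
  moreover have "centered_series a 0 1 s = deriv (fulcrum a) s * centered_series a 0 0 s"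
    using centered_series_cumulant_recursion[OF nonneg a0 s, of 0 0] by simp
  ultimately show ?thesis
    using centered_series_0_pos[OF nonneg a0 s, of 0] by (simp add: kh_mean_def sums_iff)
qed

lemma centered_series_2_at_mean:
  assumes "c = deriv (fulcrum a) s"
  shows "centered_series a c 2 s = (deriv ^^ 2) (fulcrum a) s * centered_series a c 0 s"
  using centered_series_cumulant_recursion[OF nonneg a0 s, of c 1] assms
  by (simp add: numeral_2_eq_2)

lemma kh_var_eq_deriv2_fulcrum: "kh_var a (exp s) = (deriv ^^ 2) (fulcrum a) s"
proof -
  define c where "c = deriv (fulcrum a) s"
  have "kh_var a (exp s) = centered_series a c 2 s / centered_series a c 0 s"
    using kh_centered_moment_sums[OF nonneg a0 s, of c 2]
    by (simp add: kh_var_def kh_mean_eq_deriv_fulcrum c_def sums_iff)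
  then show ?thesis
    using centered_series_2_at_mean[OF c_def] centered_series_0_pos[OF nonneg a0 s, of c] by simp
qed

context
  assumes nonconst: "\<exists>k>0. a k \<noteq> 0"
begin

lemma deriv2_fulcrum_pos: "(deriv ^^ 2) (fulcrum a) s > 0"
proof -
  define c where "c = deriv (fulcrum a) s"
  show ?thesis
    using centered_series_2_at_mean[OF c_def] centered_series_2_pos[OF nonneg a0 nonconst s, of c]
      centered_series_0_pos[OF nonneg a0 s, of c]
    by (simp add: zero_less_mult_iff)
qed

lemma fulcrum_cumulant_2: "fulcrum_cumulant a s 2 = 1"
  using deriv2_fulcrum_pos by (simp add: fulcrum_cumulant_def)

lemma kh_norm_moment_eq_centered_series:
  assumes "c = deriv (fulcrum a) s"
  shows "kh_norm_moment a j (exp s)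
    = centered_series a c j s / centered_series a c 0 s / (deriv ^^ 2) (fulcrum a) s powr (real j / 2)"
proof -
  define v where "v = (deriv ^^ 2) (fulcrum a) s"
  have "v > 0" using deriv2_fulcrum_pos by (simp add: v_def)
  then have "sqrt v ^ j = v powr (real j / 2)"
    by (simp add: powr_half_sqrt[symmetric] powr_power)
  moreover have "(\<lambda>k. (real k - c) ^ j * kh_prob a (exp s) k / sqrt v ^ j)
      sums (centered_series a c j s / centered_series a c 0 s / sqrt v ^ j)"
    using kh_centered_moment_sums[OF nonneg a0 s] by (rule sums_divide)
  ultimately show ?thesis
    unfolding kh_norm_moment_def
    by (simp add: kh_mean_eq_deriv_fulcrum kh_var_eq_deriv2_fulcrum
        assms v_def power_divide sums_iff)
qed

lemma kh_norm_moment_0: "kh_norm_moment a 0 (exp s) = 1"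
  using kh_norm_moment_eq_centered_series[OF refl]
    centered_series_0_pos[OF nonneg a0 s, of "deriv (fulcrum a) s"] deriv2_fulcrum_pos by simp

lemma kh_norm_moment_recursion:
  "kh_norm_moment a (Suc j) (exp s)
     = (\<Sum>i\<le>j. real (j choose i) * fulcrum_cumulant a s (Suc i) * kh_norm_moment a (j - i) (exp s))"
proof -
  define c where "c = deriv (fulcrum a) s"
  define v where "v = (deriv ^^ 2) (fulcrum a) s"
  define \<Phi> where "\<Phi> = centered_series a c"
  have "v > 0" using deriv2_fulcrum_pos by (simp add: v_def)
  have "\<Phi> 0 s > 0" using centered_series_0_pos[OF nonneg a0 s] by (simp add: \<Phi>_def)
  have M: "kh_norm_moment a j (exp s) = \<Phi> j s / \<Phi> 0 s / v powr (real j / 2)" for j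
    using kh_norm_moment_eq_centered_series[OF c_def] by (simp add: \<Phi>_def v_def)
  have K: "(deriv ^^ Suc i) (fulcrum a) s - (if i = 0 then c else 0)
      = fulcrum_cumulant a s (Suc i) * v powr (real (Suc i) / 2)" for i
    using \<open>v > 0\<close> by (simp add: fulcrum_cumulant_def c_def v_def)
  have split: "v powr (real (Suc j) / 2) = v powr (real (Suc i) / 2) * v powr (real (j - i) / 2)"
    if "i \<le> j" for i
    using that by (simp add: powr_add[symmetric] of_nat_diff add_divide_distrib[symmetric])
  have "\<Phi> (Suc j) s = (\<Sum>i\<le>j. real (j choose i)
      * (fulcrum_cumulant a s (Suc i) * v powr (real (Suc i) / 2)) * \<Phi> (j - i) s)"
    unfolding \<Phi>_def by (simp only: centered_series_cumulant_recursion[OF nonneg a0 s] K)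
  then have "kh_norm_moment a (Suc j) (exp s)
      = (\<Sum>i\<le>j. real (j choose i) * (fulcrum_cumulant a s (Suc i) * v powr (real (Suc i) / 2))
           * \<Phi> (j - i) s) / \<Phi> 0 s / v powr (real (Suc j) / 2)"
    by (simp add: M)
  also have "\<dots> = (\<Sum>i\<le>j. real (j choose i) * fulcrum_cumulant a s (Suc i)
      * (\<Phi> (j - i) s / \<Phi> 0 s / v powr (real (j - i) / 2)))"
    unfolding sum_divide_distrib
  proof (intro sum.cong refl)
    fix i assume "i \<in> {..j}"
    then have "i \<le> j" by simp
    show "real (j choose i) * (fulcrum_cumulant a s (Suc i) * v powr (real (Suc i) / 2))
        * \<Phi> (j - i) s / \<Phi> 0 s / v powr (real (Suc j) / 2)
      = real (j choose i) * fulcrum_cumulant a s (Suc i)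
        * (\<Phi> (j - i) s / \<Phi> 0 s / v powr (real (j - i) / 2))"
      unfolding split[OF \<open>i \<le> j\<close>] using \<open>v > 0\<close> \<open>\<Phi> 0 s > 0\<close> by simp
  qed
  finally show ?thesis by (simp add: M)
qed

end

end

section \<open>Convergence to the normal moments\<close>

lemma tendsto_moments_iff_tendsto_cumulants:
  fixes \<mu> \<kappa> :: "'x \<Rightarrow> nat \<Rightarrow> real" and \<nu> \<gamma> :: "nat \<Rightarrow> real"
  assumes rec: "eventually (\<lambda>x. \<mu> x 0 = 1 \<and>
      (\<forall>j. \<mu> x (Suc j) = (\<Sum>i\<le>j. real (j choose i) * \<kappa> x (Suc i) * \<mu> x (j - i)))) F"
    and \<nu>0: "\<nu> 0 = 1"
    and \<nu>_rec: "\<And>j. \<nu> (Suc j) = (\<Sum>i\<le>j. real (j choose i) * \<gamma> (Suc i) * \<nu> (j - i))"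
  shows "(\<forall>j\<in>{1..m}. ((\<lambda>x. \<mu> x j) \<longlongrightarrow> \<nu> j) F) \<longleftrightarrow> (\<forall>j\<in>{1..m}. ((\<lambda>x. \<kappa> x j) \<longlongrightarrow> \<gamma> j) F)"
proof (induction m)
  case 0
  then show ?case by simp
next
  case (Suc m)
  have "((\<lambda>x. \<mu> x (Suc m)) \<longlongrightarrow> \<nu> (Suc m)) F \<longleftrightarrow> ((\<lambda>x. \<kappa> x (Suc m)) \<longlongrightarrow> \<gamma> (Suc m)) F"
    if \<mu>_lim: "\<forall>j\<in>{1..m}. ((\<lambda>x. \<mu> x j) \<longlongrightarrow> \<nu> j) F"
      and \<kappa>_lim: "\<forall>j\<in>{1..m}. ((\<lambda>x. \<kappa> x j) \<longlongrightarrow> \<gamma> j) F"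
  proof -
    define R where "R x = (\<Sum>i<m. real (m choose i) * \<kappa> x (Suc i) * \<mu> x (m - i))" for x
    define R_lim where "R_lim = (\<Sum>i<m. real (m choose i) * \<gamma> (Suc i) * \<nu> (m - i))"
    have R_lim: "(R \<longlongrightarrow> R_lim) F"
      unfolding R_def R_lim_def using \<mu>_lim \<kappa>_lim by (intro tendsto_intros) auto
    have "eventually (\<lambda>x. \<mu> x (Suc m) = \<kappa> x (Suc m) + R x) F"
      using rec by eventually_elim (simp add: R_def lessThan_Suc_atMost[symmetric])
    then have "((\<lambda>x. \<mu> x (Suc m)) \<longlongrightarrow> \<nu> (Suc m)) F
        \<longleftrightarrow> ((\<lambda>x. \<kappa> x (Suc m) + R x) \<longlongrightarrow> \<gamma> (Suc m) + R_lim) F"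
      by (simp add: tendsto_cong \<nu>_rec \<nu>0 R_lim_def lessThan_Suc_atMost[symmetric] add.commute)
    also have "\<dots> \<longleftrightarrow> ((\<lambda>x. \<kappa> x (Suc m)) \<longlongrightarrow> \<gamma> (Suc m)) F"
      using tendsto_add[OF _ R_lim] tendsto_diff[OF _ R_lim] by force
    finally show ?thesis .
  qed
  moreover have "{1..Suc m} = insert (Suc m) {1..m}" by auto
  ultimately show ?case using Suc.IH by (simp only: ball_simps) blast
qed

lemma std_normal_moment_0: "std_normal_moment 0 = 1"
  using integral_std_normal_moment_even[of 0] by (simp add: std_normal_moment_def)

lemma std_normal_moment_1: "std_normal_moment 1 = 0"
  using integral_std_normal_moment_odd[of 0] by (simp add: std_normal_moment_def)

lemma std_normal_moment_Suc_Suc: "std_normal_moment (Suc (Suc j)) = real (Suc j) * std_normal_moment j"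
proof (cases "even j")
  case True
  then obtain k where k: "j = 2 * k" by blast
  have "(fact (2 * Suc k) :: real) / (2 ^ Suc k * fact (Suc k))
      = (2 * real k + 1) * (fact (2 * k) / (2 ^ k * fact k))"
  proof -
    have "(fact (2 * Suc k) :: real) = (2 * real k + 2) * (2 * real k + 1) * fact (2 * k)"
      by (simp add: fact_Suc algebra_simps)
    then show ?thesis by (simp add: fact_Suc divide_simps)
  qed
  then show ?thesis
    using integral_std_normal_moment_even[of k] integral_std_normal_moment_even[of "Suc k"]
    by (simp add: std_normal_moment_def k)
next
  case False
  then obtain k where k: "j = 2 * k + 1" using oddE by blast
  then show ?thesis
    using integral_std_normal_moment_odd[of k] integral_std_normal_moment_odd[of "Suc k"]
    by (simp add: std_normal_moment_def k)
qed

text \<open>The cumulants of the standard normal law are \<open>0, 1, 0, 0, \<dots>\<close>.\<close>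
lemma std_normal_moment_cumulant_recursion:
  "std_normal_moment (Suc j)
     = (\<Sum>i\<le>j. real (j choose i) * (if Suc i = 2 then 1 else 0) * std_normal_moment (j - i))"
proof -
  have "(\<Sum>i\<le>j. real (j choose i) * (if Suc i = 2 then 1 else 0) * std_normal_moment (j - i))
      = (\<Sum>i\<le>j. if i = 1 then real j * std_normal_moment (j - 1) else 0)"
    by (intro sum.cong) auto
  also have "\<dots> = std_normal_moment (Suc j)"
    by (cases j) (simp_all add: std_normal_moment_1[unfolded One_nat_def] std_normal_moment_Suc_Suc)
  finally show ?thesis ..
qed

lemma tendsto_std_normal_moments_iff:
  fixes \<mu> \<kappa> :: "'x \<Rightarrow> nat \<Rightarrow> real"
  assumes ev: "eventually (\<lambda>x. \<mu> x 0 = 1 \<and> \<kappa> x 1 = 0 \<and> \<kappa> x 2 = 1 \<and>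
      (\<forall>j. \<mu> x (Suc j) = (\<Sum>i\<le>j. real (j choose i) * \<kappa> x (Suc i) * \<mu> x (j - i)))) F"
  shows "(\<forall>j\<in>{3..n}. ((\<lambda>x. \<mu> x j) \<longlongrightarrow> std_normal_moment j) F)
     \<longleftrightarrow> (\<forall>j\<in>{3..n}. ((\<lambda>x. \<kappa> x j) \<longlongrightarrow> 0) F)"
proof -
  define \<gamma> :: "nat \<Rightarrow> real" where "\<gamma> i = (if i = 2 then 1 else 0)" for i
  have equiv: "(\<forall>j\<in>{1..m}. ((\<lambda>x. \<mu> x j) \<longlongrightarrow> std_normal_moment j) F)
      \<longleftrightarrow> (\<forall>j\<in>{1..m}. ((\<lambda>x. \<kappa> x j) \<longlongrightarrow> \<gamma> j) F)" for m
    using ev by (intro tendsto_moments_iff_tendsto_cumulants)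
      (auto simp: \<gamma>_def std_normal_moment_0 std_normal_moment_cumulant_recursion elim: eventually_mono)
  have "eventually (\<lambda>x. \<kappa> x 1 = \<gamma> 1 \<and> \<kappa> x 2 = \<gamma> 2) F"
    using ev by eventually_elim (simp add: \<gamma>_def)
  then have "((\<lambda>x. \<kappa> x 1) \<longlongrightarrow> \<gamma> 1) F" "((\<lambda>x. \<kappa> x 2) \<longlongrightarrow> \<gamma> 2) F"
    by (auto intro: tendsto_eventually elim: eventually_mono)
  moreover have "{1..2} = {1, 2 :: nat}" by auto
  ultimately have \<kappa>_12: "\<forall>j\<in>{1..2}. ((\<lambda>x. \<kappa> x j) \<longlongrightarrow> \<gamma> j) F" by simp
  then have \<mu>_12: "\<forall>j\<in>{1..2}. ((\<lambda>x. \<mu> x j) \<longlongrightarrow> std_normal_moment j) F"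
    using equiv by blast
  have from_3: "(\<forall>j\<in>{3..n}. P j) \<longleftrightarrow> (\<forall>j\<in>{1..max 2 n}. P j)" if "\<forall>j\<in>{1..2}. P j"
    for P :: "nat \<Rightarrow> bool"
    using that by (auto simp: not_less_eq_eq numeral_3_eq_3 numeral_2_eq_2)
  have "(\<forall>j\<in>{3..n}. ((\<lambda>x. \<mu> x j) \<longlongrightarrow> std_normal_moment j) F)
      \<longleftrightarrow> (\<forall>j\<in>{1..max 2 n}. ((\<lambda>x. \<mu> x j) \<longlongrightarrow> std_normal_moment j) F)"
    by (rule from_3[OF \<mu>_12])
  also have "\<dots> \<longleftrightarrow> (\<forall>j\<in>{1..max 2 n}. ((\<lambda>x. \<kappa> x j) \<longlongrightarrow> \<gamma> j) F)"
    by (rule equiv)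
  also have "\<dots> \<longleftrightarrow> (\<forall>j\<in>{3..n}. ((\<lambda>x. \<kappa> x j) \<longlongrightarrow> \<gamma> j) F)"
    by (rule from_3[OF \<kappa>_12, symmetric])
  also have "\<dots> \<longleftrightarrow> (\<forall>j\<in>{3..n}. ((\<lambda>x. \<kappa> x j) \<longlongrightarrow> 0) F)"
    by (intro ball_cong) (auto simp: \<gamma>_def)
  finally show ?thesis .
qed

section \<open>From t to s = ln t\<close>

lemma filtermap_exp_at_left:
  fixes r :: real
  assumes "r > 0"
  shows "filtermap exp (at_left (ln r)) = at_left r"
proof (rule filtermap_fun_inverse[of ln])
  have "eventually (\<lambda>x. x \<in> {0<..<r}) (at_left r)"
    using assms by (intro eventually_at_left_real)
  then show "filterlim ln (at_left (ln r)) (at_left r)"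
    and "eventually (\<lambda>x. exp (ln x) = x) (at_left r)"
    using assms unfolding filterlim_at
    by (auto elim!: eventually_mono intro!: tendsto_eq_intros tendsto_ident_at)
  have "exp x < r" if "x < ln r" for x
    using that assms by (metis exp_less_cancel_iff exp_ln)
  then show "filterlim exp (at_left r) (at_left (ln r))"
    using assms unfolding filterlim_at
    by (auto simp: eventually_at_filter intro!: always_eventually tendsto_eq_intros tendsto_ident_at)
qed

lemma filtermap_exp_log_radius_filter:
  fixes a :: "nat \<Rightarrow> real"
  assumes "conv_radius a > 0"
  shows "filtermap exp (log_radius_filter a) = radius_filter a"
  using assms filtermap_exp_at_left filtermap_exp_at_top
  by (cases "conv_radius a") (auto simp: radius_filter_def log_radius_filter_def)

lemma tendsto_radius_filter_iff:
  fixes a :: "nat \<Rightarrow> real"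
  assumes "conv_radius a > 0"
  shows "(g \<longlongrightarrow> L) (radius_filter a) \<longleftrightarrow> ((\<lambda>s. g (exp s)) \<longlongrightarrow> L) (log_radius_filter a)"
  by (simp add: filtermap_exp_log_radius_filter[OF assms, symmetric] tendsto_compose_filtermap[symmetric]
      o_def)

lemma eventually_exp_less_conv_radius:
  fixes a :: "nat \<Rightarrow> real"
  assumes "conv_radius a > 0"
  shows "eventually (\<lambda>s. ereal (exp s) < conv_radius a) (log_radius_filter a)"
proof -
  have "eventually (\<lambda>t. ereal t < conv_radius a) (radius_filter a)"
    using assms by (cases "conv_radius a") (auto simp: radius_filter_def eventually_at_filter)
  then show ?thesis
    by (simp add: filtermap_exp_log_radius_filter[OF assms, symmetric] eventually_filtermap)
qed

theorem theorem2p4: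
  fixes a :: "nat \<Rightarrow> real" and n :: nat
  assumes nonneg: "\<forall>k. a k \<ge> 0"
    and a0: "a 0 > 0"
    and nonconst: "\<exists>k>0. a k \<noteq> 0"
    and radius: "conv_radius a > 0"
    and n3: "n \<ge> 3"
  shows "(\<forall>j\<in>{3..n}. ((\<lambda>t. kh_norm_moment a j t) \<longlongrightarrow> std_normal_moment j) (radius_filter a))
     \<longleftrightarrow> (\<forall>j\<in>{3..n}. ((\<lambda>s. (deriv ^^ j) (fulcrum a) s
                                / ((deriv ^^ 2) (fulcrum a) s) powr (real j / 2))
                         \<longlongrightarrow> 0) (log_radius_filter a))"
proof -
  have "eventually (\<lambda>s. kh_norm_moment a 0 (exp s) = 1 \<and> fulcrum_cumulant a s 1 = 0
      \<and> fulcrum_cumulant a s 2 = 1 \<and> (\<forall>j. kh_norm_moment a (Suc j) (exp s) = (\<Sum>i\<le>j.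
         real (j choose i) * fulcrum_cumulant a s (Suc i) * kh_norm_moment a (j - i) (exp s))))
    (log_radius_filter a)"
    using eventually_exp_less_conv_radius[OF radius]
    by eventually_elim (simp add: kh_norm_moment_0 fulcrum_cumulant_2 kh_norm_moment_recursion
        nonneg a0 nonconst; simp add: fulcrum_cumulant_def)
  then have "(\<forall>j\<in>{3..n}. ((\<lambda>s. kh_norm_moment a j (exp s)) \<longlongrightarrow> std_normal_moment j)
        (log_radius_filter a))
      \<longleftrightarrow> (\<forall>j\<in>{3..n}. ((\<lambda>s. fulcrum_cumulant a s j) \<longlongrightarrow> 0) (log_radius_filter a))"
    by (rule tendsto_std_normal_moments_iff)
  then show ?thesis
    by (simp add: tendsto_radius_filter_iff[OF radius] fulcrum_cumulant_def)
qed

end
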